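(* Let $\theta>0$ and let $A_n^\theta(t)$ be the number of non-mutant ancestral lines at time $t$ back in the star-shaped coalescent with mutation started from $n\ge1$ lines (all lines merge into one at an exponential rate-1 time $T$; mutations at rate $\theta/2$ per line; after $T$ the single line is non-mutant iff at least one line was non-mutant at $T$ and no mutation occurs on it afterwards). Then for $n\ge1$ and $j=0,\ldots,n$, \[ P(A_n^\theta(t)=j)=\sum_{k=0}^ne^{-\lambda_kt}Q_n^{(k)}P_j^{(k)}, \] where $\lambda_0=0$, $\lambda_1=\theta/2$, $\lambda_k=1+k\theta/2$ for $k\ge2$; $Q_n^{(0)}=1$, \[ Q_n^{(1)}=\sum_{i=1}^n\binom ni\frac{(-1)^{i-1}}{1+(i-1)\theta/2},\qquad Q_n^{(k)}=\binom nk(-1)^{k-1}\frac{(k-1)(1+k\theta/2)}{1+(k-1)\theta/2},\ 1<k\le n; \] $P_0^{(0)}=1$, $P_0^{(1)}=-1$, $P_0^{(k)}=-\frac{\theta/2}{1+k\theta/2}$ for $2\le k\le n$; $P_1^{(0)}=0$, $P_1^{(k)}=1$ for $1\le k\le n$; and for $2\le j\le n$: $P_j^{(0)}=P_j^{(1)}=0$ and \[ P_j^{(k)}=\binom kj(-1)^{j-1}\frac{1+(k-1)\theta/2}{(k-1)(1+k\theta/2)},\quad 2\le k\le n \] (with $\binom kj=0$ for $j>k$). *)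

theory Defs
  imports "HOL-Probability.Probability"
begin

text \<open>Coordinate 0: merger time T ~ Exp(1).
  Coordinates 1..n: time of first mutation on line i (backwards in time), ~ Exp(theta/2).
  Coordinate n+1: time (measured from T) of the first mutation on the single line after the
  merger, ~ Exp(theta/2).\<close>

definition star_space :: "real \<Rightarrow> nat \<Rightarrow> (nat \<Rightarrow> real) measure" where
  "star_space \<theta> n =
     PiM {0..n+1} (\<lambda>i. density lborel (exponential_density (if i = 0 then 1 else \<theta> / 2)))"

definition A_count :: "nat \<Rightarrow> real \<Rightarrow> (nat \<Rightarrow> real) \<Rightarrow> nat" where
  "A_count n t \<omega> =
     (if t < \<omega> 0 then card {i \<in> {1..n}. t < \<omega> i}
      else if (\<exists>i\<in>{1..n}. \<omega> 0 < \<omega> i) \<and> t - \<omega> 0 < \<omega> (n+1) then 1 else 0)"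

definition lam :: "real \<Rightarrow> nat \<Rightarrow> real" where
  "lam \<theta> k = (if k = 0 then 0 else if k = 1 then \<theta> / 2 else 1 + real k * \<theta> / 2)"

definition Qc :: "real \<Rightarrow> nat \<Rightarrow> nat \<Rightarrow> real" where
  "Qc \<theta> n k =
     (if k = 0 then 1
      else if k = 1 then
        (\<Sum>i=1..n. real (n choose i) * (-1) ^ (i - 1) / (1 + (real i - 1) * \<theta> / 2))
      else real (n choose k) * (-1) ^ (k - 1) * ((real k - 1) * (1 + real k * \<theta> / 2))
             / (1 + (real k - 1) * \<theta> / 2))"

definition Pc :: "real \<Rightarrow> nat \<Rightarrow> nat \<Rightarrow> real" where
  "Pc \<theta> j k =
     (if j = 0 then (if k = 0 then 1 else if k = 1 then -1 else - (\<theta> / 2) / (1 + real k * \<theta> / 2))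
      else if j = 1 then (if k = 0 then 0 else 1)
      else if k \<le> 1 then 0
      else real (k choose j) * (-1) ^ (j - 1) * (1 + (real k - 1) * \<theta> / 2)
             / ((real k - 1) * (1 + real k * \<theta> / 2)))"

end

theory Submission
  imports Defs
begin

text \<open>Up to the merger time T the n lines mutate independently, so on the event t < T the number
  of non-mutant lines is binomial with success probability p = exp(-t\<theta>/2), weighted by
  P(T > t) = exp(-t). On T \<le> t a single line remains; conditioning on T and integrating gives the
  probability that it is non-mutant as an explicit finite sum (merger_survival). Expanding
  (1 - p)^(n-j) and 1 - (1 - q)^n by the binomial theorem writes every probability as a linear
  combination of 1, exp(-t\<theta>/2) = exp(-\<lambda>_1 t) and exp(-t) p^k = exp(-\<lambda>_k t) for k \<ge> 2; the
  coefficient of exp(-\<lambda>_k t) is Q_n^(k) P_j^(k).\<close>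

lemma exponential_measure_atMost:
  assumes "0 < l"
  shows "measure (density lborel (exponential_density l)) {..x} = (if x < 0 then 0 else 1 - exp (- x * l))"
  using emeasure_erlang_density[of l 0 x] assms
  by (simp add: erlang_CDF_0 mult.commute measure_def)

lemma exponential_measure_greaterThan:
  assumes "0 < l" "0 \<le> x"
  shows "measure (density lborel (exponential_density l)) {x<..} = exp (- x * l)"
proof -
  interpret prob_space "density lborel (exponential_density l)"
    using assms(1) by (rule prob_space_exponential_density)
  have "{x<..} = space (density lborel (exponential_density l)) - {..x}" by auto
  then show ?thesis
    using prob_compl[of "{..x}"] exponential_measure_atMost[OF assms(1), of x] assms(2) by simp
qed

lemma (in product_prob_space) measure_PiM_Collect:
  assumes "J \<subseteq> I" "finite J" "\<And>i. i \<in> J \<Longrightarrow> X i \<in> sets (M i)"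
  shows "measure (PiM I M) {x\<in>space (PiM I M). \<forall>i\<in>J. x i \<in> X i} = (\<Prod>i\<in>J. measure (M i) (X i))"
  using emeasure_PiM_Collect[OF assms]
  by (simp add: P.emeasure_eq_measure M.emeasure_eq_measure prod_ennreal prod_nonneg)

lemma one_minus_power_alternating:
  fixes q :: "'a :: comm_ring_1"
  shows "1 - (1 - q) ^ n = (\<Sum>i=1..n. of_nat (n choose i) * (-1) ^ (i - 1) * q ^ i)"
proof -
  have summand: "of_nat (n choose i) * (-q) ^ i = - (of_nat (n choose i) * (-1) ^ (i - 1) * q ^ i)"
    if "1 \<le> i" for i
  proof -
    have "(-q) ^ i = (-1) ^ i * q ^ i"
      by (metis mult_minus1 power_mult_distrib)
    with that show ?thesis
      by (cases i) simp_all
  qed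
  have "(1 - q) ^ n = (\<Sum>i\<le>n. of_nat (n choose i) * (-q) ^ i)"
    using binomial_ring[of "-q" 1 n] by simp
  also have "\<dots> = 1 + (\<Sum>i=1..n. of_nat (n choose i) * (-q) ^ i)"
    by (simp add: atMost_atLeast0 sum.atLeast_Suc_atMost)
  also have "(\<Sum>i=1..n. of_nat (n choose i) * (-q) ^ i) = - (\<Sum>i=1..n. of_nat (n choose i) * (-1) ^ (i - 1) * q ^ i)"
    unfolding sum_negf[symmetric] by (rule sum.cong[OF refl], rule summand) simp
  finally show ?thesis by simp
qed

lemma binomial_term_alternating_sum:
  fixes p :: "'a :: comm_ring_1"
  assumes "j \<le> n"
  shows "of_nat (n choose j) * p ^ j * (1 - p) ^ (n - j)
    = (\<Sum>k=0..n. of_nat (n choose k) * of_nat (k choose j) * (-1) ^ (k - j) * p ^ k)"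
proof -
  define F where "F k = of_nat (n choose k) * of_nat (k choose j) * (-1) ^ (k - j) * p ^ k" for k
  have "(1 - p) ^ (n - j) = (\<Sum>m=0..n-j. of_nat ((n - j) choose m) * (-1) ^ m * p ^ m)"
    using binomial_ring[of "-p" 1 "n - j"]
    by (simp add: atMost_atLeast0 power_mult_distrib[symmetric] mult.assoc)
  then have "of_nat (n choose j) * p ^ j * (1 - p) ^ (n - j) = (\<Sum>m=0..n-j. F (m + j))"
  proof (simp add: sum_distrib_left, intro sum.cong refl)
    fix m assume "m \<in> {0..n - j}"
    then have "(n choose (m + j)) * ((m + j) choose j) = (n choose j) * ((n - j) choose m)"
      using choose_mult[of j "m + j" n] assms by auto
    then have "of_nat (n choose (m + j)) * of_nat ((m + j) choose j)
        = (of_nat (n choose j) * of_nat ((n - j) choose m) :: 'a)"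
      by (metis of_nat_mult)
    then show "of_nat (n choose j) * p ^ j * (of_nat ((n - j) choose m) * (-1) ^ m * p ^ m) = F (m + j)"
      unfolding F_def by (simp add: power_add mult_ac)
  qed
  also have "\<dots> = (\<Sum>k=j..n. F k)"
    using sum.shift_bounds_cl_nat_ivl[of F 0 j "n - j"] assms by simp
  also have "\<dots> = (\<Sum>k=0..n. F k)"
    by (rule sum.mono_neutral_left) (auto simp: F_def binomial_eq_0)
  finally show ?thesis
    unfolding F_def .
qed

lemma sum_split_first_terms:
  fixes f :: "nat \<Rightarrow> 'a :: comm_monoid_add"
  assumes "1 \<le> n"
  shows "(\<Sum>k=0..n. f k) = f 0 + f 1 + (\<Sum>k=2..n. f k)"
    and "(\<Sum>k=1..n. f k) = f 1 + (\<Sum>k=2..n. f k)"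
  using assms by (simp_all add: sum.atLeast_Suc_atMost numeral_2_eq_2 add.assoc)

lemma exp_neg_has_integral:
  fixes c t :: real
  assumes "0 < c" "0 \<le> t"
  shows "((\<lambda>y. exp (- (c * y))) has_integral (1 - exp (- (c * t))) / c) {0..t}"
proof -
  have "((\<lambda>y. exp (- (c * y))) has_integral (- exp (- (c * t)) / c) - (- exp (- (c * 0)) / c)) {0..t}"
    using assms
    by (intro fundamental_theorem_of_calculus)
       (auto intro!: derivative_eq_intros simp flip: has_real_derivative_iff_has_vector_derivative)
  then show ?thesis
    by (simp add: diff_divide_distrib)
qed

abbreviation star_factor :: "real \<Rightarrow> nat \<Rightarrow> real measure" where
  "star_factor \<theta> i \<equiv> density lborel (exponential_density (if i = 0 then 1 else \<theta> / 2))"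

lemma product_prob_space_star_factor: "0 < \<theta> \<Longrightarrow> product_prob_space (star_factor \<theta>)"
  unfolding product_prob_space_def product_prob_space_axioms_def product_sigma_finite_def
  by (auto intro!: prob_space_exponential_density prob_space_imp_sigma_finite)

lemma prob_space_star_space: "0 < \<theta> \<Longrightarrow> prob_space (star_space \<theta> n)"
  unfolding star_space_def by (rule prob_space_PiM) (auto intro: prob_space_exponential_density)

lemma space_star_space: "space (star_space \<theta> n) = PiE {0..n+1} (\<lambda>_. UNIV)"
  unfolding star_space_def by (simp add: space_PiM)

lemma measure_star_survivor_set:
  assumes \<theta>: "0 < \<theta>" and t: "0 \<le> t" and S: "S \<subseteq> {1..n}"
  defines "F \<equiv> {\<omega> \<in> space (star_space \<theta> n). t < \<omega> 0 \<and> {i\<in>{1..n}. t < \<omega> i} = S}"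
  shows "F \<in> sets (star_space \<theta> n)"
    and "measure (star_space \<theta> n) F
      = exp (- t) * exp (- t * (\<theta>/2)) ^ card S * (1 - exp (- t * (\<theta>/2))) ^ (n - card S)"
proof -
  interpret P: product_prob_space "star_factor \<theta>" "{0..n+1}"
    using \<theta> by (rule product_prob_space_star_factor)
  define X where "X i = (if i = 0 \<or> i \<in> S then {t<..} else {..t})" for i
  have "(\<forall>i\<in>{1..n}. \<omega> i \<in> X i) \<longleftrightarrow> {i\<in>{1..n}. t < \<omega> i} = S" for \<omega> :: "nat \<Rightarrow> real"
    using S by (auto simp: X_def not_less) (meson atLeastAtMost_iff not_le)
  moreover have "{0..n} = insert 0 {1..n}" by auto
  ultimately have F_eq: "F = {\<omega> \<in> space (star_space \<theta> n). \<forall>i\<in>{0..n}. \<omega> i \<in> X i}"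
    unfolding F_def by (auto simp: X_def)
  show "F \<in> sets (star_space \<theta> n)"
    unfolding F_eq X_def star_space_def by measurable (auto intro!: pred_sets2[where N = borel])
  define p where "p = exp (- t * (\<theta>/2))"
  have factor: "measure (star_factor \<theta> i) (X i) = (if i \<in> S then p else 1 - p)" if "i \<in> {1..n}" for i
    using that \<theta> t by (simp add: X_def exponential_measure_greaterThan exponential_measure_atMost p_def)
  have "measure (star_space \<theta> n) F = (\<Prod>i\<in>{0..n}. measure (star_factor \<theta> i) (X i))"
    unfolding F_eq star_space_def by (rule P.measure_PiM_Collect) (auto simp: X_def)
  also have "\<dots> = exp (- t) * (\<Prod>i\<in>{1..n}. if i \<in> S then p else 1 - p)"
    using t factor by (simp add: prod.atLeast_Suc_atMost[of 0 n] X_def exponential_measure_greaterThan)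
  also have "\<dots> = exp (- t) * p ^ card S * (1 - p) ^ (n - card S)"
    using S finite_subset[OF S] by (simp add: prod.If_cases Int_absorb1 Diff_eq[symmetric] card_Diff_subset)
  finally show "measure (star_space \<theta> n) F = exp (- t) * p ^ card S * (1 - p) ^ (n - card S)" .
qed

lemma measure_star_unmerged_survivors:
  assumes \<theta>: "0 < \<theta>" and t: "0 \<le> t"
  shows "measure (star_space \<theta> n) {\<omega> \<in> space (star_space \<theta> n). t < \<omega> 0 \<and> card {i\<in>{1..n}. t < \<omega> i} = j}
     = exp (- t) * real (n choose j) * exp (- t * (\<theta>/2)) ^ j * (1 - exp (- t * (\<theta>/2))) ^ (n - j)"
proof -
  let ?M = "star_space \<theta> n"
  interpret M: prob_space ?M
    using \<theta> by (rule prob_space_star_space)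
  define F where "F S = {\<omega> \<in> space ?M. t < \<omega> 0 \<and> {i\<in>{1..n}. t < \<omega> i} = S}" for S
  define Sj where "Sj = {S. S \<subseteq> {1..n} \<and> card S = j}"
  have "{\<omega> \<in> space ?M. t < \<omega> 0 \<and> card {i\<in>{1..n}. t < \<omega> i} = j} = (\<Union>S\<in>Sj. F S)"
    by (auto simp: F_def Sj_def)
  moreover have "measure ?M (\<Union>S\<in>Sj. F S) = (\<Sum>S\<in>Sj. measure ?M (F S))"
    using measure_star_survivor_set(1)[OF \<theta> t]
    by (intro M.finite_measure_finite_Union) (auto simp: F_def Sj_def disjoint_family_on_def)
  moreover have "(\<Sum>S\<in>Sj. measure ?M (F S))
      = real (n choose j) * (exp (- t) * exp (- t * (\<theta>/2)) ^ j * (1 - exp (- t * (\<theta>/2))) ^ (n - j))"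
    using measure_star_survivor_set(2)[OF \<theta> t] n_subsets[of "{1..n}" j] by (simp add: F_def Sj_def)
  ultimately show ?thesis
    by simp
qed

lemma measure_star_merger_time_le:
  assumes \<theta>: "0 < \<theta>" and t: "0 \<le> t"
  shows "measure (star_space \<theta> n) {\<omega> \<in> space (star_space \<theta> n). \<omega> 0 \<le> t} = 1 - exp (- t)"
proof -
  interpret P: product_prob_space "star_factor \<theta>" "{0..n+1}"
    using \<theta> by (rule product_prob_space_star_factor)
  have "measure (star_space \<theta> n) {\<omega> \<in> space (star_space \<theta> n). \<forall>i\<in>{0}. \<omega> i \<in> {..t}}
      = (\<Prod>i\<in>{0}. measure (star_factor \<theta> i) {..t})"
    unfolding star_space_def by (rule P.measure_PiM_Collect) auto
  then show ?thesis
    using t by (simp add: exponential_measure_atMost)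
qed

lemma measure_survivor_given_merger_time:
  assumes \<theta>: "0 < \<theta>" and yt: "y \<le> t"
  shows "measure (PiM {1..n+1} (star_factor \<theta>))
      {x \<in> space (PiM {1..n+1} (star_factor \<theta>)). (\<exists>i\<in>{1..n}. y < x i) \<and> t - y < x (n+1)}
    = exp (- (t - y) * (\<theta>/2)) * (1 - (if y < 0 then 0 else 1 - exp (- y * (\<theta>/2))) ^ n)"
proof -
  let ?N = "PiM {1..n+1} (star_factor \<theta>)"
  interpret P: product_prob_space "star_factor \<theta>" "{1..n+1}"
    using \<theta> by (rule product_prob_space_star_factor)
  have index_eq: "{1..n+1} = insert (n+1) {1..n}" by auto
  define F where "F i = (if i = n+1 then {t-y<..} else {..y})" for i :: nat
  define A where "A = {x \<in> space ?N. \<forall>i\<in>{n+1}. x i \<in> {t-y<..}}"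
  define B where "B = {x \<in> space ?N. \<forall>i\<in>{1..n+1}. x i \<in> F i}"
  have event_eq: "{x \<in> space ?N. (\<exists>i\<in>{1..n}. y < x i) \<and> t - y < x (n+1)} = A - B"
    unfolding A_def B_def index_eq by (auto simp: F_def not_le)
  have mA: "measure ?N A = exp (- (t - y) * (\<theta>/2))"
    unfolding A_def using \<theta> yt
    by (subst P.measure_PiM_Collect) (auto simp: exponential_measure_greaterThan)
  have "measure ?N B = (\<Prod>i\<in>insert (n+1) {1..n}. measure (star_factor \<theta> i) (F i))"
    unfolding B_def by (subst P.measure_PiM_Collect) (auto simp: F_def simp flip: index_eq)
  also have "\<dots> = exp (- (t - y) * (\<theta>/2)) * (if y < 0 then 0 else 1 - exp (- y * (\<theta>/2))) ^ n"
    using \<theta> yt by (simp add: F_def exponential_measure_greaterThan exponential_measure_atMost)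
  finally have mB: "measure ?N B = \<dots>" .
  have "measure ?N (A - B) = measure ?N A - measure ?N B"
    by (rule P.finite_measure_Diff) (auto simp: A_def B_def F_def)
  then show ?thesis
    unfolding event_eq mA mB by (simp add: algebra_simps)
qed

lemma nn_integral_star_merged_fibre:
  assumes \<theta>: "0 < \<theta>"
  shows "(\<integral>\<^sup>+ x. indicator
      {\<omega> \<in> space (star_space \<theta> n). \<omega> 0 \<le> t \<and> (\<exists>i\<in>{1..n}. \<omega> 0 < \<omega> i) \<and> t - \<omega> 0 < \<omega> (n+1)} (x(0 := y))
      \<partial>PiM {1..n+1} (star_factor \<theta>))
    = ennreal (if y \<le> t
        then exp (- (t - y) * (\<theta>/2)) * (1 - (if y < 0 then 0 else 1 - exp (- y * (\<theta>/2))) ^ n) else 0)"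
    (is "(\<integral>\<^sup>+ x. indicator ?E (x(0 := y)) \<partial>?N) = _")
proof (cases "y \<le> t")
  case True
  interpret P: product_prob_space "star_factor \<theta>" "{1..n+1}"
    using \<theta> by (rule product_prob_space_star_factor)
  let ?S = "{x \<in> space ?N. (\<exists>i\<in>{1..n}. y < x i) \<and> t - y < x (n+1)}"
  have "?S \<in> sets ?N"
    by measurable
  have "(\<integral>\<^sup>+ x. indicator ?E (x(0 := y)) \<partial>?N) = (\<integral>\<^sup>+ x. indicator ?S x \<partial>?N)"
    using True by (intro nn_integral_cong)
      (auto simp: indicator_def space_star_space space_PiM PiE_def extensional_def)
  also have "\<dots> = emeasure ?N ?S"
    using \<open>?S \<in> sets ?N\<close> by simp
  also have "\<dots> = ennreal (measure ?N ?S)"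
    by (rule P.emeasure_eq_measure)
  finally show ?thesis
    using measure_survivor_given_merger_time[OF \<theta> True] True by simp
qed (simp add: indicator_def)

lemma merger_summand_has_integral:
  fixes a t :: real
  assumes a: "0 < a" and t: "0 \<le> t" and i: "1 \<le> i"
  shows "((\<lambda>y. exp (- y) * exp (- y * a) ^ i * exp (- (t - y) * a)) has_integral
     (exp (- t * a) - exp (- t) * exp (- t * a) ^ i) / (1 + (real i - 1) * a)) {0..t}"
proof -
  define c where "c = 1 + (real i - 1) * a"
  have "0 < c"
    using a i by (simp add: c_def add_pos_nonneg)
  have summand: "exp (- y) * exp (- y * a) ^ i * exp (- (t - y) * a) = exp (- t * a) * exp (- (c * y))" for y
  proof -
    have "- y + real i * (- y * a) + - (t - y) * a = - t * a + - (c * y)"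
      by (simp add: c_def algebra_simps)
    then show ?thesis
      by (simp flip: exp_add exp_of_nat_mult)
  qed
  have "((\<lambda>y. exp (- t * a) * exp (- (c * y))) has_integral exp (- t * a) * ((1 - exp (- (c * t))) / c)) {0..t}"
    using \<open>0 < c\<close> t by (intro has_integral_mult_right exp_neg_has_integral)
  moreover have "exp (- t * a) * ((1 - exp (- (c * t))) / c) = (exp (- t * a) - exp (- t) * exp (- t * a) ^ i) / c"
    using summand[of t] by (simp add: right_diff_distrib)
  ultimately show ?thesis
    unfolding summand c_def[symmetric] by (simp only:)
qed

lemma merger_time_has_integral:
  fixes a t :: real
  assumes a: "0 < a" and t: "0 \<le> t"
  shows "((\<lambda>y. exp (- y) * (1 - (1 - exp (- y * a)) ^ n) * exp (- (t - y) * a)) has_integral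
     (\<Sum>i=1..n. real (n choose i) * (-1) ^ (i - 1) * (exp (- t * a) - exp (- t) * exp (- t * a) ^ i)
        / (1 + (real i - 1) * a))) {0..t}"
proof -
  have "exp (- y) * (1 - (1 - exp (- y * a)) ^ n) * exp (- (t - y) * a)
      = (\<Sum>i=1..n. real (n choose i) * (-1) ^ (i - 1) * (exp (- y) * exp (- y * a) ^ i * exp (- (t - y) * a)))"
    for y
    by (simp add: one_minus_power_alternating sum_distrib_left sum_distrib_right mult_ac)
  moreover have "((\<lambda>y. \<Sum>i=1..n. real (n choose i) * (-1) ^ (i - 1)
        * (exp (- y) * exp (- y * a) ^ i * exp (- (t - y) * a))) has_integral
      (\<Sum>i=1..n. real (n choose i) * (-1) ^ (i - 1)
        * ((exp (- t * a) - exp (- t) * exp (- t * a) ^ i) / (1 + (real i - 1) * a)))) {0..t}"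
    using a t by (intro has_integral_sum has_integral_mult_right merger_summand_has_integral) auto
  ultimately show ?thesis
    by simp
qed

lemma emeasure_star_merged_survivor_integral:
  assumes \<theta>: "0 < \<theta>"
  shows "emeasure (star_space \<theta> n)
      {\<omega> \<in> space (star_space \<theta> n). \<omega> 0 \<le> t \<and> (\<exists>i\<in>{1..n}. \<omega> 0 < \<omega> i) \<and> t - \<omega> 0 < \<omega> (n+1)}
    = (\<integral>\<^sup>+ y. ennreal (if y \<in> {0..t}
        then exp (- y) * (1 - (1 - exp (- y * (\<theta>/2))) ^ n) * exp (- (t - y) * (\<theta>/2)) else 0) \<partial>lborel)"
    (is "emeasure _ ?E = _")
proof -
  define J where "J = {1..n+1}"
  interpret P: product_prob_space "star_factor \<theta>" J
    using \<theta> by (rule product_prob_space_star_factor)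
  have M_eq: "star_space \<theta> n = PiM (insert 0 J) (star_factor \<theta>)"
    unfolding star_space_def J_def by (rule arg_cong2[where f = PiM]) auto
  have E_sets: "?E \<in> sets (star_space \<theta> n)"
    unfolding star_space_def by measurable
  define g where "g y = (if y \<le> t
    then exp (- (t - y) * (\<theta>/2)) * (1 - (if y < 0 then 0 else 1 - exp (- y * (\<theta>/2))) ^ n) else 0)" for y
  have g_nonneg: "0 \<le> g y" for y
  proof -
    have "(if y < 0 then 0 else 1 - exp (- y * (\<theta>/2))) ^ n \<le> 1"
      using \<theta> by (auto intro!: power_le_one)
    then show ?thesis
      by (simp add: g_def)
  qed
  have density: "exponential_density 1 y * g y = (if y \<in> {0..t}
      then exp (- y) * (1 - (1 - exp (- y * (\<theta>/2))) ^ n) * exp (- (t - y) * (\<theta>/2)) else 0)" for y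
    by (auto simp: exponential_density_def g_def)
  have "emeasure (star_space \<theta> n) ?E = (\<integral>\<^sup>+ w. indicator ?E w \<partial>PiM (insert 0 J) (star_factor \<theta>))"
    using E_sets unfolding M_eq by simp
  also have "\<dots> = (\<integral>\<^sup>+ y. (\<integral>\<^sup>+ x. indicator ?E (x(0 := y)) \<partial>PiM J (star_factor \<theta>)) \<partial>star_factor \<theta> 0)"
    using E_sets unfolding M_eq
    by (intro P.product_nn_integral_insert_rev borel_measurable_indicator) (auto simp: J_def)
  also have "\<dots> = (\<integral>\<^sup>+ y. ennreal (exponential_density 1 y) * ennreal (g y) \<partial>lborel)"
    unfolding J_def nn_integral_star_merged_fibre[OF \<theta>] by (simp add: nn_integral_density g_def)
  also have "\<dots> = (\<integral>\<^sup>+ y. ennreal (exponential_density 1 y * g y) \<partial>lborel)"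
    by (simp add: ennreal_mult' g_nonneg)
  finally show ?thesis
    unfolding density .
qed

definition merger_survival :: "real \<Rightarrow> nat \<Rightarrow> real \<Rightarrow> real" where
  "merger_survival \<theta> n t = (\<Sum>i=1..n. real (n choose i) * (-1) ^ (i - 1)
      * (exp (- t * (\<theta>/2)) - exp (- t) * exp (- t * (\<theta>/2)) ^ i) / (1 + (real i - 1) * \<theta> / 2))"

lemma measure_star_merged_survivor:
  assumes \<theta>: "0 < \<theta>" and t: "0 \<le> t"
  shows "measure (star_space \<theta> n)
      {\<omega> \<in> space (star_space \<theta> n). \<omega> 0 \<le> t \<and> (\<exists>i\<in>{1..n}. \<omega> 0 < \<omega> i) \<and> t - \<omega> 0 < \<omega> (n+1)}
    = merger_survival \<theta> n t"
proof -
  define f where "f y = (if y \<in> {0..t}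
    then exp (- y) * (1 - (1 - exp (- y * (\<theta>/2))) ^ n) * exp (- (t - y) * (\<theta>/2)) else 0)" for y
  have f_nonneg: "0 \<le> f y" for y
  proof -
    have "0 \<le> y \<Longrightarrow> (1 - exp (- y * (\<theta>/2))) ^ n \<le> 1"
      using \<theta> by (intro power_le_one) auto
    then show ?thesis
      by (simp add: f_def)
  qed
  have f_integral: "(f has_integral merger_survival \<theta> n t) UNIV"
    unfolding f_def has_integral_restrict_UNIV merger_survival_def
    using merger_time_has_integral[of "\<theta>/2" t n] \<theta> t by simp
  have "(\<integral>\<^sup>+ y. ennreal (f y) \<partial>lborel) = ennreal (merger_survival \<theta> n t)"
    by (rule nn_integral_has_integral_lborel[OF _ f_nonneg f_integral]) (unfold f_def, measurable)
  moreover have "0 \<le> merger_survival \<theta> n t"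
    by (rule has_integral_nonneg[OF f_integral f_nonneg])
  ultimately show ?thesis
    using emeasure_star_merged_survivor_integral[OF \<theta>, of n t] by (simp add: measure_def f_def)
qed

lemma measure_A_count_ge2:
  assumes \<theta>: "0 < \<theta>" and t: "0 \<le> t" and j: "2 \<le> j"
  shows "measure (star_space \<theta> n) {\<omega> \<in> space (star_space \<theta> n). A_count n t \<omega> = j}
    = exp (- t) * real (n choose j) * exp (- t * (\<theta>/2)) ^ j * (1 - exp (- t * (\<theta>/2))) ^ (n - j)"
proof -
  have "{\<omega> \<in> space (star_space \<theta> n). A_count n t \<omega> = j}
      = {\<omega> \<in> space (star_space \<theta> n). t < \<omega> 0 \<and> card {i\<in>{1..n}. t < \<omega> i} = j}"
    using j by (auto simp: A_count_def)
  then show ?thesis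
    using measure_star_unmerged_survivors[OF \<theta> t] by simp
qed

lemma measure_A_count_one:
  assumes \<theta>: "0 < \<theta>" and t: "0 \<le> t"
  shows "measure (star_space \<theta> n) {\<omega> \<in> space (star_space \<theta> n). A_count n t \<omega> = 1}
    = exp (- t) * real n * exp (- t * (\<theta>/2)) * (1 - exp (- t * (\<theta>/2))) ^ (n - 1)
      + merger_survival \<theta> n t"
proof -
  let ?M = "star_space \<theta> n"
  interpret M: prob_space ?M
    using \<theta> by (rule prob_space_star_space)
  define U where "U = {\<omega> \<in> space ?M. t < \<omega> 0 \<and> card {i\<in>{1..n}. t < \<omega> i} = 1}"
  define E where "E = {\<omega> \<in> space ?M. \<omega> 0 \<le> t \<and> (\<exists>i\<in>{1..n}. \<omega> 0 < \<omega> i) \<and> t - \<omega> 0 < \<omega> (n+1)}"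
  have "U \<in> sets ?M" "E \<in> sets ?M"
    unfolding U_def E_def star_space_def by measurable
  moreover have "{\<omega> \<in> space ?M. A_count n t \<omega> = 1} = U \<union> E" "U \<inter> E = {}"
    by (auto simp: A_count_def U_def E_def)
  ultimately have "measure ?M {\<omega> \<in> space ?M. A_count n t \<omega> = 1} = measure ?M U + measure ?M E"
    using M.finite_measure_Union by simp
  then show ?thesis
    unfolding U_def E_def
    using measure_star_unmerged_survivors[OF \<theta> t] measure_star_merged_survivor[OF \<theta> t] by simp
qed

lemma measure_A_count_zero:
  assumes \<theta>: "0 < \<theta>" and t: "0 \<le> t"
  shows "measure (star_space \<theta> n) {\<omega> \<in> space (star_space \<theta> n). A_count n t \<omega> = 0}
    = exp (- t) * (1 - exp (- t * (\<theta>/2))) ^ n + (1 - exp (- t) - merger_survival \<theta> n t)"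
proof -
  let ?M = "star_space \<theta> n"
  interpret M: prob_space ?M
    using \<theta> by (rule prob_space_star_space)
  define U where "U = {\<omega> \<in> space ?M. t < \<omega> 0 \<and> card {i\<in>{1..n}. t < \<omega> i} = 0}"
  define E where "E = {\<omega> \<in> space ?M. \<omega> 0 \<le> t \<and> (\<exists>i\<in>{1..n}. \<omega> 0 < \<omega> i) \<and> t - \<omega> 0 < \<omega> (n+1)}"
  define T where "T = {\<omega> \<in> space ?M. \<omega> 0 \<le> t}"
  have sets: "U \<in> sets ?M" "E \<in> sets ?M" "T \<in> sets ?M"
    unfolding U_def E_def T_def star_space_def by measurable
  moreover have "{\<omega> \<in> space ?M. A_count n t \<omega> = 0} = U \<union> (T - E)" "U \<inter> (T - E) = {}" "E \<subseteq> T"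
    by (auto simp: A_count_def U_def E_def T_def)
  ultimately have "measure ?M {\<omega> \<in> space ?M. A_count n t \<omega> = 0} = measure ?M U + (measure ?M T - measure ?M E)"
    using M.finite_measure_Union[of U "T - E"] M.finite_measure_Diff[of T E] by simp
  then show ?thesis
    unfolding U_def E_def T_def
    using measure_star_unmerged_survivors[OF \<theta> t, of n 0] measure_star_merged_survivor[OF \<theta> t]
      measure_star_merger_time_le[OF \<theta> t] by simp
qed

lemma exp_lam_ge2:
  assumes "2 \<le> k"
  shows "exp (- lam \<theta> k * t) = exp (- t) * exp (- t * (\<theta>/2)) ^ k"
proof -
  have "- lam \<theta> k * t = - t + real k * (- t * (\<theta>/2))"
    using assms by (simp add: lam_def algebra_simps)
  then show ?thesis
    by (simp only: exp_add exp_of_nat_mult)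
qed

lemma Qc_Pc_ge2:
  assumes \<theta>: "0 < \<theta>" and k: "2 \<le> k" and j: "2 \<le> j"
  shows "Qc \<theta> n k * Pc \<theta> j k = real (n choose k) * real (k choose j) * (-1) ^ (k - j)"
proof (cases "j \<le> k")
  case True
  define u where "u = (real k - 1) * (1 + real k * \<theta> / 2)"
  define v where "v = 1 + (real k - 1) * \<theta> / 2"
  have "0 \<le> (real k - 1) * \<theta> / 2" "0 \<le> real k * \<theta> / 2" "1 < real k"
    using \<theta> k by simp_all
  then have "u \<noteq> 0" "v \<noteq> 0"
    unfolding u_def v_def by (simp, linarith)+
  moreover have Qc: "Qc \<theta> n k = real (n choose k) * (-1) ^ (k - 1) * u / v"
    and Pc: "Pc \<theta> j k = real (k choose j) * (-1) ^ (j - 1) * v / u"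
    using k j by (simp_all add: Qc_def Pc_def u_def v_def)
  moreover have sign: "(-1 :: real) ^ (k - 1) * (-1) ^ (j - 1) = (-1) ^ (k - j)"
  proof -
    have "k - 1 + (j - 1) = k - j + 2 * (j - 1)"
      using True j by simp
    then show ?thesis
      unfolding power_add[symmetric] by (simp add: power_add power_mult)
  qed
  ultimately show ?thesis
    unfolding Qc Pc sign[symmetric] by (simp add: field_simps)
qed (use k j in \<open>simp add: Qc_def Pc_def\<close>)

text \<open>For j = 1 and j = 0 the coefficient of exp(-\<lambda>_k t) is assembled from a binomial term and a
  merger term with denominator 1 + (k - 1)\<theta>/2; this is the shape in which it appears.\<close>

lemma Qc_Pc_one:
  assumes \<theta>: "0 < \<theta>" and k: "2 \<le> k"
  shows "Qc \<theta> n k * Pc \<theta> 1 k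
    = real (n choose k) * (-1) ^ (k - 1) * (real k - 1 / (1 + (real k - 1) * \<theta> / 2))"
proof -
  define u where "u = (real k - 1) * (1 + real k * \<theta> / 2)"
  define v where "v = 1 + (real k - 1) * \<theta> / 2"
  have "0 \<le> (real k - 1) * \<theta> / 2"
    using \<theta> k by simp
  then have "v \<noteq> 0"
    unfolding v_def by linarith
  moreover have "real k * v - 1 = u"
    by (simp add: u_def v_def algebra_simps)
  ultimately have "real k - 1 / v = u / v"
    by (simp add: field_simps)
  moreover have "Qc \<theta> n k * Pc \<theta> 1 k = real (n choose k) * (-1) ^ (k - 1) * u / v"
    using k by (simp add: Qc_def Pc_def u_def v_def)
  ultimately show ?thesis
    unfolding v_def[symmetric] by simp
qed

lemma Qc_Pc_zero:
  assumes \<theta>: "0 < \<theta>" and k: "2 \<le> k"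
  shows "Qc \<theta> n k * Pc \<theta> 0 k
    = real (n choose k) * (-1) ^ (k - 1) * (1 / (1 + (real k - 1) * \<theta> / 2) - 1)"
proof -
  define v where "v = 1 + (real k - 1) * \<theta> / 2"
  define d where "d = 1 + real k * \<theta> / 2"
  have "0 \<le> (real k - 1) * \<theta> / 2" "0 \<le> real k * \<theta> / 2"
    using \<theta> k by simp_all
  then have "v \<noteq> 0" "d \<noteq> 0"
    unfolding v_def d_def by linarith+
  then have "(real k - 1) * d / v * (- (\<theta> / 2) / d) = - ((real k - 1) * (\<theta> / 2)) / v"
    by (simp add: field_simps)
  also have "\<dots> = (1 - v) / v"
    by (simp add: v_def)
  also have "\<dots> = 1 / v - 1"
    using \<open>v \<noteq> 0\<close> by (simp add: diff_divide_distrib)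
  finally have "(real k - 1) * d / v * (- (\<theta> / 2) / d) = 1 / v - 1" .
  moreover have "Qc \<theta> n k * Pc \<theta> 0 k
      = real (n choose k) * (-1) ^ (k - 1) * ((real k - 1) * d / v * (- (\<theta> / 2) / d))"
    using k by (simp add: Qc_def Pc_def v_def d_def)
  ultimately show ?thesis
    unfolding v_def[symmetric] by simp
qed

lemma merger_survival_spectral:
  "merger_survival \<theta> n t = exp (- lam \<theta> 1 * t) * Qc \<theta> n 1
     - (\<Sum>k=1..n. real (n choose k) * (-1) ^ (k - 1) * (exp (- t) * exp (- t * (\<theta>/2)) ^ k)
          / (1 + (real k - 1) * \<theta> / 2))"
  unfolding merger_survival_def Qc_def lam_def
  by (simp add: sum_distrib_left sum_subtractf[symmetric] diff_divide_distrib right_diff_distrib mult_ac)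

lemma spectral_expansion_ge2:
  assumes \<theta>: "0 < \<theta>" and j: "2 \<le> j" "j \<le> n"
  shows "exp (- t) * real (n choose j) * exp (- t * (\<theta>/2)) ^ j * (1 - exp (- t * (\<theta>/2))) ^ (n - j)
    = (\<Sum>k=0..n. exp (- lam \<theta> k * t) * Qc \<theta> n k * Pc \<theta> j k)"
proof -
  have "exp (- t) * real (n choose j) * exp (- t * (\<theta>/2)) ^ j * (1 - exp (- t * (\<theta>/2))) ^ (n - j)
      = (\<Sum>k=0..n. real (n choose k) * real (k choose j) * (-1) ^ (k - j) * (exp (- t) * exp (- t * (\<theta>/2)) ^ k))"
    using binomial_term_alternating_sum[OF j(2), of "exp (- t * (\<theta>/2))"]
    by (simp add: sum_distrib_left mult_ac)
  also have "\<dots> = (\<Sum>k=0..n. exp (- lam \<theta> k * t) * Qc \<theta> n k * Pc \<theta> j k)"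
  proof (rule sum.cong[OF refl])
    fix k
    show "real (n choose k) * real (k choose j) * (-1) ^ (k - j) * (exp (- t) * exp (- t * (\<theta>/2)) ^ k)
        = exp (- lam \<theta> k * t) * Qc \<theta> n k * Pc \<theta> j k"
    proof (cases "2 \<le> k")
      case True
      then show ?thesis
        using exp_lam_ge2[OF True, of \<theta> t] Qc_Pc_ge2[OF \<theta> True j(1), of n] by (simp add: mult_ac)
    qed (use j in \<open>simp add: Pc_def\<close>)
  qed
  finally show ?thesis .
qed

lemma spectral_expansion_one:
  assumes \<theta>: "0 < \<theta>" and n: "1 \<le> n"
  shows "exp (- t) * real n * exp (- t * (\<theta>/2)) * (1 - exp (- t * (\<theta>/2))) ^ (n - 1)
      + merger_survival \<theta> n t
    = (\<Sum>k=0..n. exp (- lam \<theta> k * t) * Qc \<theta> n k * Pc \<theta> 1 k)"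
proof -
  define p where "p = exp (- t * (\<theta>/2))"
  define c where "c k = 1 + (real k - 1) * \<theta> / 2" for k :: nat
  define r where "r k = real (n choose k) * (-1) ^ (k - 1) * (exp (- t) * p ^ k)" for k
  have binomial: "exp (- t) * real n * p * (1 - p) ^ (n - 1) = (\<Sum>k=1..n. real k * r k)"
  proof -
    have "real n * p * (1 - p) ^ (n - 1)
        = (\<Sum>k=0..n. real (n choose k) * real (k choose 1) * (-1) ^ (k - 1) * p ^ k)"
      using binomial_term_alternating_sum[of 1 n p] n by simp
    then have "exp (- t) * real n * p * (1 - p) ^ (n - 1)
        = exp (- t) * (\<Sum>k=0..n. real (n choose k) * real (k choose 1) * (-1) ^ (k - 1) * p ^ k)"
      by (simp only: mult.assoc)
    also have "\<dots> = (\<Sum>k=1..n. real k * r k)"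
      unfolding sum_split_first_terms[OF n] by (simp add: distrib_left sum_distrib_left r_def mult_ac)
    finally show ?thesis .
  qed
  have merger: "merger_survival \<theta> n t = p * Qc \<theta> n 1 - (\<Sum>k=1..n. r k / c k)"
    using merger_survival_spectral[of \<theta> n t] by (simp add: p_def r_def c_def lam_def mult.commute)
  have summand: "exp (- lam \<theta> k * t) * Qc \<theta> n k * Pc \<theta> 1 k = r k * (real k - 1 / c k)"
    if "k \<in> {2..n}" for k
    using that exp_lam_ge2[of k \<theta> t] Qc_Pc_one[OF \<theta>, of k n] by (simp add: r_def c_def p_def mult_ac)
  have "(\<Sum>k=0..n. exp (- lam \<theta> k * t) * Qc \<theta> n k * Pc \<theta> 1 k)
      = p * Qc \<theta> n 1 + (\<Sum>k=1..n. r k * (real k - 1 / c k))"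
    unfolding sum_split_first_terms[OF n] using summand by (simp add: Pc_def lam_def p_def c_def mult.commute)
  then show ?thesis
    unfolding p_def[symmetric] binomial merger
    by (simp add: sum_subtractf right_diff_distrib mult_ac)
qed

lemma spectral_expansion_zero:
  assumes \<theta>: "0 < \<theta>" and n: "1 \<le> n"
  shows "exp (- t) * (1 - exp (- t * (\<theta>/2))) ^ n + (1 - exp (- t) - merger_survival \<theta> n t)
    = (\<Sum>k=0..n. exp (- lam \<theta> k * t) * Qc \<theta> n k * Pc \<theta> 0 k)"
proof -
  define p where "p = exp (- t * (\<theta>/2))"
  define c where "c k = 1 + (real k - 1) * \<theta> / 2" for k :: nat
  define r where "r k = real (n choose k) * (-1) ^ (k - 1) * (exp (- t) * p ^ k)" for k
  have sign: "(-1 :: real) ^ k = - ((-1) ^ (k - 1))" if "1 \<le> k" for k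
    using that by (cases k) simp_all
  have binomial: "exp (- t) * (1 - p) ^ n = exp (- t) - (\<Sum>k=1..n. r k)"
  proof -
    have "(1 - p) ^ n = (\<Sum>k=0..n. real (n choose k) * (-1) ^ k * p ^ k)"
      using binomial_term_alternating_sum[of 0 n p] by simp
    then have "exp (- t) * (1 - p) ^ n = exp (- t) * (\<Sum>k=0..n. real (n choose k) * (-1) ^ k * p ^ k)"
      by simp
    also have "\<dots> = exp (- t) - (\<Sum>k=1..n. r k)"
      unfolding sum_split_first_terms[OF n] by (simp add: right_diff_distrib distrib_left sum_distrib_left r_def sign sum_negf mult_ac)
    finally show ?thesis .
  qed
  have merger: "merger_survival \<theta> n t = p * Qc \<theta> n 1 - (\<Sum>k=1..n. r k / c k)"
    using merger_survival_spectral[of \<theta> n t] by (simp add: p_def r_def c_def lam_def mult.commute)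
  have summand: "exp (- lam \<theta> k * t) * Qc \<theta> n k * Pc \<theta> 0 k = r k * (1 / c k - 1)"
    if "k \<in> {2..n}" for k
    using that exp_lam_ge2[of k \<theta> t] Qc_Pc_zero[OF \<theta>, of k n] by (simp add: r_def c_def p_def mult_ac)
  have "(\<Sum>k=0..n. exp (- lam \<theta> k * t) * Qc \<theta> n k * Pc \<theta> 0 k)
      = 1 - p * Qc \<theta> n 1 + (\<Sum>k=1..n. r k * (1 / c k - 1))"
    unfolding sum_split_first_terms[OF n] using summand by (simp add: Pc_def Qc_def lam_def p_def c_def mult.commute)
  then show ?thesis
    unfolding p_def[symmetric] binomial merger
    by (simp add: sum_subtractf right_diff_distrib mult_ac)
qed

theorem theorem5:
  fixes \<theta> t :: real and n j :: nat
  assumes "\<theta> > 0" and "t \<ge> 0" and "n \<ge> 1" and "j \<le> n"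
  shows "measure (star_space \<theta> n) {\<omega> \<in> space (star_space \<theta> n). A_count n t \<omega> = j}
           = (\<Sum>k=0..n. exp (- lam \<theta> k * t) * Qc \<theta> n k * Pc \<theta> j k)"
proof -
  consider "2 \<le> j" | "j = 1" | "j = 0"
    by linarith
  then show ?thesis
  proof cases
    case 1
    then show ?thesis
      using measure_A_count_ge2 spectral_expansion_ge2 assms by simp
  next
    case 2
    then show ?thesis
      using measure_A_count_one spectral_expansion_one assms by simp
  next
    case 3
    then show ?thesis
      using measure_A_count_zero spectral_expansion_zero assms by simp
  qed
qed

end
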